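(* For every finite graph $G$ and every integer $i\geq1$, $$\mathrm{lw}_i(G)=\min_{(P^1,\mathcal{Z}^1),\ldots,(P^i,\mathcal{Z}^i)}\ \max\Big\{\Big|\bigcap_{j=1}^i Z^j_{u_j}\Big| : u_j\in V(P^j)\text{ for } j=1,\ldots,i\Big\},$$ where the minimum ranges over all $i$-tuples of path decompositions $(P^j,\mathcal{Z}^j)$, $\mathcal{Z}^j=(Z^j_u)_{u\in V(P^j)}$, of $G$.
   Context: All graphs are finite, simple and undirected. A path decomposition of $G$ is a pair $(P,\mathcal{Z})$ with $P$ a path and $\mathcal{Z}=(Z_u)_{u\in V(P)}$ subsets of $V(G)$ such that every edge of $G$ lies in some $Z_u$ and for every $v\in V(G)$ the set $\{u: v\in Z_u\}$ is non-empty and induces a connected subpath of $P$. For vertices $u,v$ of a connected graph, the interval $I(u,v)$ is the set of vertices lying on some shortest $(u,v)$-path. A set $S$ of vertices is (geodesically) convex if $I(u,v)\subseteq S$ for all $u,v\in S$. A graph $M$ is median if it is connected and for any three vertices $u,v,w$ we have $|I(u,v)\cap I(v,w)\cap I(w,u)|=1$. A median decomposition of a graph $G$ is a pair $(M,\mathcal{X})$ where $M$ is a median graph and $\mathcal{X}=(X_a)_{a\in V(M)}$ is a family of subsets of $V(G)$ (bags) such that (M1) for every edge $uv\in E(G)$ there is $a\in V(M)$ with $u,v\in X_a$, and (M2) for every $v\in V(G)$ the set $\{a\in V(M): v\in X_a\}$ is non-empty and convex in $M$. Its width is $\max_{a\in V(M)}|X_a|$. A $k$-lattice is a Cartesian product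 of $k$ (finite) paths. The lattice dimension of a graph $M$ is the least $k$ such that $M$ admits an isometric (distance-preserving) embedding into a $k$-lattice. For $i\geq1$, an $i$-lattice decomposition of $G$ is a median decomposition $(M,\mathcal{X})$ of $G$ with $M$ of lattice dimension at most $i$, and the $i$-latticewidth $\mathrm{lw}_i(G)$ is the minimum width of an $i$-lattice decomposition of $G$. *)

theory Defs
  imports Main
begin

definition graph :: "'a set \<Rightarrow> 'a set set \<Rightarrow> bool" where
  "graph V E \<longleftrightarrow> finite V \<and> (\<forall>e\<in>E. \<exists>x y. x \<noteq> y \<and> x \<in> V \<and> y \<in> V \<and> e = {x, y})"

definition walk :: "'a set \<Rightarrow> 'a set set \<Rightarrow> 'a list \<Rightarrow> bool" where
  "walk V E xs \<longleftrightarrow> xs \<noteq> [] \<and> set xs \<subseteq> V \<and>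
     (\<forall>k. Suc k < length xs \<longrightarrow> {xs ! k, xs ! Suc k} \<in> E)"

definition connected_graph :: "'a set \<Rightarrow> 'a set set \<Rightarrow> bool" where
  "connected_graph V E \<longleftrightarrow> V \<noteq> {} \<and>
     (\<forall>u\<in>V. \<forall>v\<in>V. \<exists>xs. walk V E xs \<and> hd xs = u \<and> last xs = v)"

definition gdist :: "'a set \<Rightarrow> 'a set set \<Rightarrow> 'a \<Rightarrow> 'a \<Rightarrow> nat" where
  "gdist V E u v = (LEAST n. \<exists>xs. walk V E xs \<and> hd xs = u \<and> last xs = v \<and> length xs = Suc n)"

definition interval :: "'a set \<Rightarrow> 'a set set \<Rightarrow> 'a \<Rightarrow> 'a \<Rightarrow> 'a set" where
  "interval V E u v = {w. \<exists>xs. walk V E xs \<and> hd xs = u \<and> last xs = v \<and>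
       length xs = Suc (gdist V E u v) \<and> w \<in> set xs}"

definition convex :: "'a set \<Rightarrow> 'a set set \<Rightarrow> 'a set \<Rightarrow> bool" where
  "convex V E S \<longleftrightarrow> S \<subseteq> V \<and> (\<forall>u\<in>S. \<forall>v\<in>S. interval V E u v \<subseteq> S)"

definition median_graph :: "'a set \<Rightarrow> 'a set set \<Rightarrow> bool" where
  "median_graph V E \<longleftrightarrow> graph V E \<and> connected_graph V E \<and>
     (\<forall>u\<in>V. \<forall>v\<in>V. \<forall>w\<in>V.
        card (interval V E u v \<inter> interval V E v w \<inter> interval V E w u) = 1)"

definition path_V :: "nat \<Rightarrow> nat set" where
  "path_V n = {0..<n}"

definition path_E :: "nat \<Rightarrow> nat set set" where
  "path_E n = {{k, Suc k} | k. Suc k < n}"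

definition path_decomp :: "'a set \<Rightarrow> 'a set set \<Rightarrow> nat \<Rightarrow> (nat \<Rightarrow> 'a set) \<Rightarrow> bool" where
  "path_decomp V E n Z \<longleftrightarrow> n \<ge> 1 \<and> (\<forall>u\<in>path_V n. Z u \<subseteq> V) \<and>
     (\<forall>e\<in>E. \<exists>u\<in>path_V n. e \<subseteq> Z u) \<and>
     (\<forall>v\<in>V. connected_graph {u\<in>path_V n. v \<in> Z u} {e\<in>path_E n. e \<subseteq> {u\<in>path_V n. v \<in> Z u}})"

definition median_decomp ::
  "'a set \<Rightarrow> 'a set set \<Rightarrow> 'b set \<Rightarrow> 'b set set \<Rightarrow> ('b \<Rightarrow> 'a set) \<Rightarrow> bool" where
  "median_decomp V E VM EM X \<longleftrightarrow> median_graph VM EM \<and> (\<forall>a\<in>VM. X a \<subseteq> V) \<and>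
     (\<forall>e\<in>E. \<exists>a\<in>VM. e \<subseteq> X a) \<and>
     (\<forall>v\<in>V. {a\<in>VM. v \<in> X a} \<noteq> {} \<and> convex VM EM {a\<in>VM. v \<in> X a})"

definition width :: "'b set \<Rightarrow> ('b \<Rightarrow> 'a set) \<Rightarrow> nat" where
  "width VM X = Max ((\<lambda>a. card (X a)) ` VM)"

text \<open>The k-lattice P_{ns!0} x ... x P_{ns!(k-1)} (k = length ns), vertices as coordinate lists.\<close>
definition lattice_V :: "nat list \<Rightarrow> nat list set" where
  "lattice_V ns = {xs. length xs = length ns \<and> (\<forall>j<length ns. xs ! j < ns ! j)}"

definition lattice_E :: "nat list \<Rightarrow> nat list set set" where
  "lattice_E ns = {{xs, ys} | xs ys. xs \<in> lattice_V ns \<and> ys \<in> lattice_V ns \<and>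
     (\<exists>j<length ns. Suc (xs ! j) = ys ! j \<and> (\<forall>l<length ns. l \<noteq> j \<longrightarrow> xs ! l = ys ! l))}"

definition isometric_embedding ::
  "'b set \<Rightarrow> 'b set set \<Rightarrow> 'c set \<Rightarrow> 'c set set \<Rightarrow> ('b \<Rightarrow> 'c) \<Rightarrow> bool" where
  "isometric_embedding V E V' E' f \<longleftrightarrow> f ` V \<subseteq> V' \<and>
     (\<forall>x\<in>V. \<forall>y\<in>V. gdist V' E' (f x) (f y) = gdist V E x y)"

text \<open>Lattice dimension at most k: isometric embedding into some k'-lattice with k' <= k
  (equivalently, the least such k' is at most k).\<close>
definition lattice_dim_le :: "'b set \<Rightarrow> 'b set set \<Rightarrow> nat \<Rightarrow> bool" where
  "lattice_dim_le V E k \<longleftrightarrow> (\<exists>ns f. length ns \<le> k \<and> (\<forall>j<length ns. ns ! j \<ge> 1) \<and>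
      isometric_embedding V E (lattice_V ns) (lattice_E ns) f)"

text \<open>i-latticewidth. Median graphs are finite, so their vertices are w.l.o.g. natural numbers.\<close>
definition latticewidth :: "nat \<Rightarrow> 'a set \<Rightarrow> 'a set set \<Rightarrow> nat" where
  "latticewidth i V E = (LEAST w. \<exists>(VM :: nat set) EM X.
      median_decomp V E VM EM X \<and> lattice_dim_le VM EM i \<and> width VM X = w)"

end

theory Submission
  imports Defs
begin

text \<open>Both sides describe the same objects coordinate by coordinate. Given path decompositions
  \<open>Z\<^sup>1, \<dots>, Z\<^sup>i\<close>, the bags \<open>\<Inter>\<^sub>j Z\<^sup>j (x\<^sub>j)\<close> indexed by the points \<open>x\<close> of the product of the paths form
  a median decomposition of that \<open>i\<close>-lattice: the trace of a vertex is a product of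
  intervals, hence convex, and the bags are exactly the intersections in the formula.
  Conversely, let a median decomposition be isometrically embedded into a lattice. Uniting the
  bags over each hyperplane orthogonal to the \<open>j\<close>-th axis gives a path decomposition, because
  traces are convex and so project onto intervals. An intersection of such united bags lies
  inside a single bag: by the gate property of convex sets in median graphs, the vertex whose
  image is \<open>\<ell>\<^sub>1\<close>-closest to the chosen lattice point belongs to every trace that meets all
  the chosen hyperplanes.\<close>

section \<open>Walks and distances\<close>

lemma walk_single [simp]: "walk V E [x] \<longleftrightarrow> x \<in> V"
  by (simp add: walk_def)

lemma walk_Cons_Cons: "walk V E (x # y # xs) \<longleftrightarrow> x \<in> V \<and> {x, y} \<in> E \<and> walk V E (y # xs)"
proof
  assume h: "walk V E (x # y # xs)"
  have "{x, y} \<in> E" using h unfolding walk_def by (force dest: spec[of _ 0])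
  with h show "x \<in> V \<and> {x, y} \<in> E \<and> walk V E (y # xs)" by (auto simp: walk_def)
next
  assume h: "x \<in> V \<and> {x, y} \<in> E \<and> walk V E (y # xs)"
  show "walk V E (x # y # xs)" unfolding walk_def
  proof (intro conjI allI impI)
    show "set (x # y # xs) \<subseteq> V" using h by (auto simp: walk_def)
  next
    fix k assume "Suc k < length (x # y # xs)"
    then show "{(x # y # xs) ! k, (x # y # xs) ! Suc k} \<in> E" using h
      by (cases k) (auto simp: walk_def)
  qed simp
qed

lemma walk_append:
  "walk V E xs \<Longrightarrow> walk V E ys \<Longrightarrow> last xs = hd ys \<Longrightarrow> walk V E (xs @ tl ys)"
proof (induction xs rule: induct_list012)
  case (2 x)
  then show ?case by (cases ys) (auto simp: walk_def)
next
  case (3 x y zs)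
  then show ?case by (simp add: walk_Cons_Cons)
qed (simp add: walk_def)

lemma walk_rev: "walk V E xs \<Longrightarrow> walk V E (rev xs)"
proof (induction xs rule: induct_list012)
  case (3 x y zs)
  then have "walk V E (y # zs)" "{x, y} \<in> E" "x \<in> V" by (simp_all add: walk_Cons_Cons)
  then have "walk V E (rev (y # zs))" "walk V E [y, x]"
    using "3.IH" by (auto simp: walk_Cons_Cons insert_commute walk_def)
  from walk_append[OF this] show ?case by simp
qed (simp_all add: walk_def)

lemma walk_take: "walk V E xs \<Longrightarrow> k < length xs \<Longrightarrow> walk V E (take (Suc k) xs)"
  unfolding walk_def by (auto dest: in_set_takeD)

lemma walk_drop: "walk V E xs \<Longrightarrow> k < length xs \<Longrightarrow> walk V E (drop k xs)"
  unfolding walk_def by (auto dest: in_set_dropD)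

lemma gdist_less_length:
  assumes "walk V E xs" "hd xs = u" "last xs = v"
  shows "gdist V E u v < length xs"
proof -
  have ne: "xs \<noteq> []" using assms(1) by (simp add: walk_def)
  have "gdist V E u v \<le> length xs - 1" unfolding gdist_def
    by (rule Least_le) (use assms ne in auto)
  then show ?thesis using ne by (cases xs) auto
qed

lemma shortest_walk_exists:
  assumes "connected_graph V E" "u \<in> V" "v \<in> V"
  shows "\<exists>xs. walk V E xs \<and> hd xs = u \<and> last xs = v \<and> length xs = Suc (gdist V E u v)"
proof -
  obtain ys where ys: "walk V E ys" "hd ys = u" "last ys = v"
    using assms unfolding connected_graph_def by blast
  then have "ys \<noteq> []" by (simp add: walk_def)
  with ys have "\<exists>n xs. walk V E xs \<and> hd xs = u \<and> last xs = v \<and> length xs = Suc n"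
    by (intro exI[of _ "length ys - 1"] exI[of _ ys]) auto
  then show ?thesis unfolding gdist_def by (rule LeastI_ex)
qed

lemma walk_concat_ends:
  assumes "walk V E xs" "walk V E ys" "last xs = hd ys"
  shows "walk V E (xs @ tl ys) \<and> hd (xs @ tl ys) = hd xs \<and> last (xs @ tl ys) = last ys \<and>
    length (xs @ tl ys) = length xs + length ys - 1"
  using assms walk_append[OF assms] by (cases ys) (auto simp: walk_def)

lemma gdist_sym:
  assumes "connected_graph V E" "u \<in> V" "v \<in> V"
  shows "gdist V E u v = gdist V E v u"
proof -
  have "gdist V E v u \<le> gdist V E u v" if uv: "u \<in> V" "v \<in> V" for u v
  proof -
    obtain xs where xs: "walk V E xs" "hd xs = u" "last xs = v" "length xs = Suc (gdist V E u v)"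
      using shortest_walk_exists[OF assms(1) uv] by blast
    then have "xs \<noteq> []" by (simp add: walk_def)
    with xs have "gdist V E v u < length (rev xs)"
      by (intro gdist_less_length[OF walk_rev[OF xs(1)]]) (auto simp: hd_rev last_rev)
    then show ?thesis using xs by simp
  qed
  then show ?thesis using assms by (meson le_antisym)
qed

lemma gdist_triangle:
  assumes "connected_graph V E" "u \<in> V" "v \<in> V" "w \<in> V"
  shows "gdist V E u w \<le> gdist V E u v + gdist V E v w"
proof -
  obtain xs where xs: "walk V E xs" "hd xs = u" "last xs = v" "length xs = Suc (gdist V E u v)"
    using shortest_walk_exists[OF assms(1,2,3)] by blast
  obtain ys where ys: "walk V E ys" "hd ys = v" "last ys = w" "length ys = Suc (gdist V E v w)"
    using shortest_walk_exists[OF assms(1,3,4)] by blast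
  from xs ys have "gdist V E u w < length (xs @ tl ys)"
    using walk_concat_ends[OF xs(1) ys(1)] gdist_less_length by metis
  then show ?thesis using xs ys by simp
qed

lemma gdist_eq_0_iff:
  assumes "connected_graph V E" "u \<in> V" "v \<in> V"
  shows "gdist V E u v = 0 \<longleftrightarrow> u = v"
proof
  assume "gdist V E u v = 0"
  then obtain xs where "walk V E xs" "hd xs = u" "last xs = v" "length xs = Suc 0"
    using shortest_walk_exists[OF assms] by auto
  then show "u = v" by (cases xs) auto
next
  assume "u = v"
  then show "gdist V E u v = 0" using gdist_less_length[of V E "[u]" u u] assms by simp
qed

lemma interval_subset: "interval V E u v \<subseteq> V"
  by (auto simp: interval_def walk_def)

lemma mem_interval_iff:
  assumes "connected_graph V E" "u \<in> V" "v \<in> V"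
  shows "w \<in> interval V E u v \<longleftrightarrow> w \<in> V \<and> gdist V E u w + gdist V E w v = gdist V E u v"
proof
  assume "w \<in> interval V E u v"
  then obtain xs where xs: "walk V E xs" "hd xs = u" "last xs = v"
      "length xs = Suc (gdist V E u v)" "w \<in> set xs"
    unfolding interval_def by blast
  obtain k where k: "k < length xs" "xs ! k = w" using xs(5) by (auto simp: in_set_conv_nth)
  have ne: "xs \<noteq> []" and wV: "w \<in> V" using xs(1,5) by (auto simp: walk_def)
  have "hd (take (Suc k) xs) = u" using ne xs(2) by (cases xs) auto
  then have "gdist V E u w < length (take (Suc k) xs)"
    using k by (intro gdist_less_length[OF walk_take[OF xs(1) k(1)]]) (auto simp: take_Suc_conv_app_nth)
  moreover have "gdist V E w v < length (drop k xs)"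
    using xs k ne by (intro gdist_less_length[OF walk_drop[OF xs(1) k(1)]]) (auto simp: hd_drop_conv_nth)
  ultimately have "gdist V E u w + gdist V E w v \<le> gdist V E u v"
    using k xs(4) by simp
  with gdist_triangle[OF assms(1,2) wV assms(3)] wV
  show "w \<in> V \<and> gdist V E u w + gdist V E w v = gdist V E u v" by simp
next
  assume h: "w \<in> V \<and> gdist V E u w + gdist V E w v = gdist V E u v"
  obtain xs where xs: "walk V E xs" "hd xs = u" "last xs = w" "length xs = Suc (gdist V E u w)"
    using shortest_walk_exists[OF assms(1,2)] h by blast
  obtain ys where ys: "walk V E ys" "hd ys = w" "last ys = v" "length ys = Suc (gdist V E w v)"
    using shortest_walk_exists[OF assms(1)] h assms(3) by blast
  have "w \<in> set (xs @ tl ys)" using xs by (auto simp: walk_def)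
  with walk_concat_ends[OF xs(1) ys(1)] xs ys h
  show "w \<in> interval V E u v" unfolding interval_def by auto
qed

section \<open>Lattices\<close>

definition nat_dist :: "nat \<Rightarrow> nat \<Rightarrow> nat" where
  "nat_dist a b = (a - b) + (b - a)"

definition l1_dist :: "nat list \<Rightarrow> nat list \<Rightarrow> nat" where
  "l1_dist xs ys = (\<Sum>j<length xs. nat_dist (xs ! j) (ys ! j))"

lemma nat_dist_commute: "nat_dist a b = nat_dist b a"
  by (simp add: nat_dist_def)

lemma nat_dist_eq_0_iff [simp]: "nat_dist a b = 0 \<longleftrightarrow> a = b"
  by (auto simp: nat_dist_def)

lemma nat_dist_triangle: "nat_dist a c \<le> nat_dist a b + nat_dist b c"
  by (simp add: nat_dist_def)

lemma nat_dist_between_iff: "nat_dist a w + nat_dist w b = nat_dist a b \<longleftrightarrow> min a b \<le> w \<and> w \<le> max a b"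
  by (auto simp: nat_dist_def)

lemma l1_dist_commute: "length x = length y \<Longrightarrow> l1_dist x y = l1_dist y x"
  by (simp add: l1_dist_def nat_dist_commute)

lemma l1_dist_triangle: "length x = length y \<Longrightarrow> l1_dist x z \<le> l1_dist x y + l1_dist y z"
  unfolding l1_dist_def by (simp add: sum.distrib[symmetric] sum_mono nat_dist_triangle)

lemma l1_dist_eq_0_iff: "length x = length y \<Longrightarrow> l1_dist x y = 0 \<longleftrightarrow> x = y"
  by (auto simp: l1_dist_def intro: nth_equalityI)

lemma l1_dist_between_iff:
  assumes "length x = k" "length y = k" "length w = k"
  shows "l1_dist x w + l1_dist w y = l1_dist x y \<longleftrightarrow>
    (\<forall>j<k. nat_dist (x ! j) (w ! j) + nat_dist (w ! j) (y ! j) = nat_dist (x ! j) (y ! j))"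
proof
  assume "l1_dist x w + l1_dist w y = l1_dist x y"
  then have eq: "(\<Sum>j<k. nat_dist (x ! j) (y ! j)) = (\<Sum>j<k. nat_dist (x ! j) (w ! j) + nat_dist (w ! j) (y ! j))"
    using assms by (simp add: l1_dist_def sum.distrib)
  show "\<forall>j<k. nat_dist (x ! j) (w ! j) + nat_dist (w ! j) (y ! j) = nat_dist (x ! j) (y ! j)"
    using sum_mono_inv[OF eq nat_dist_triangle] by simp
qed (use assms in \<open>simp add: l1_dist_def sum.distrib[symmetric]\<close>)

lemma lattice_V_length: "x \<in> lattice_V ns \<Longrightarrow> length x = length ns"
  by (simp add: lattice_V_def)

lemma finite_lattice_V: "finite (lattice_V ns)"
proof -
  have "lattice_V ns \<subseteq> {xs. set xs \<subseteq> {..<sum_list ns} \<and> length xs = length ns}"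
    using elem_le_sum_list[of _ ns] by (fastforce simp: lattice_V_def in_set_conv_nth)
  moreover have "finite {xs. set xs \<subseteq> {..<sum_list ns} \<and> length xs = length ns}"
    by (rule finite_lists_length_eq) simp
  ultimately show ?thesis by (rule finite_subset)
qed

lemma lattice_edgeD:
  assumes "{x, y} \<in> lattice_E ns"
  shows "x \<in> lattice_V ns \<and> y \<in> lattice_V ns \<and> l1_dist x y = 1 \<and> x \<noteq> y"
proof -
  obtain xs ys j where h: "{x, y} = {xs, ys}" "xs \<in> lattice_V ns" "ys \<in> lattice_V ns" "j < length ns"
    "Suc (xs ! j) = ys ! j" "\<forall>l<length ns. l \<noteq> j \<longrightarrow> xs ! l = ys ! l"
    using assms unfolding lattice_E_def by blast
  have len: "length xs = length ns" "length ys = length ns" using h by (auto simp: lattice_V_def)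
  have "l1_dist xs ys = (\<Sum>l<length ns. if l = j then 1 else 0)"
    unfolding l1_dist_def len by (rule sum.cong) (use h in \<open>auto simp: nat_dist_def\<close>)
  also have "\<dots> = 1" using h(4) by simp
  finally have "l1_dist xs ys = 1" .
  moreover have "(x = xs \<and> y = ys) \<or> (x = ys \<and> y = xs)" using h(1) by (auto simp: doubleton_eq_iff)
  ultimately show ?thesis using h(2,3,5) len l1_dist_commute[of xs ys] by auto
qed

lemma graph_lattice: "graph (lattice_V ns) (lattice_E ns)"
  unfolding graph_def
proof (intro conjI ballI)
  fix e assume "e \<in> lattice_E ns"
  moreover obtain xs ys where "e = {xs, ys}" using \<open>e \<in> lattice_E ns\<close> unfolding lattice_E_def by blast
  ultimately show "\<exists>x y. x \<noteq> y \<and> x \<in> lattice_V ns \<and> y \<in> lattice_V ns \<and> e = {x, y}"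
    using lattice_edgeD by blast
qed (rule finite_lattice_V)

lemma l1_dist_less_length_walk:
  "walk (lattice_V ns) (lattice_E ns) xs \<Longrightarrow> l1_dist (hd xs) (last xs) < length xs"
proof (induction xs rule: induct_list012)
  case (2 x)
  then show ?case by (simp add: l1_dist_eq_0_iff lattice_V_length)
next
  case (3 x y zs)
  then have e: "{x, y} \<in> lattice_E ns" and w: "walk (lattice_V ns) (lattice_E ns) (y # zs)"
    by (simp_all add: walk_Cons_Cons)
  then have "length x = length y" using lattice_edgeD lattice_V_length by metis
  then have "l1_dist x (last (y # zs)) \<le> l1_dist x y + l1_dist y (last (y # zs))"
    by (rule l1_dist_triangle)
  then show ?case using "3.IH"(2)[OF w] lattice_edgeD[OF e] by simp
qed (simp add: walk_def)

lemma lattice_step_towards: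
  assumes "x \<in> lattice_V ns" "y \<in> lattice_V ns" "x \<noteq> y"
  shows "\<exists>x'. {x, x'} \<in> lattice_E ns \<and> x' \<in> lattice_V ns \<and> Suc (l1_dist x' y) = l1_dist x y"
proof -
  have len: "length x = length ns" "length y = length ns" using assms by (auto simp: lattice_V_length)
  then obtain j where j: "j < length ns" "x ! j \<noteq> y ! j" using assms(3) by (metis nth_equalityI)
  define x' where "x' = x[j := if x ! j < y ! j then Suc (x ! j) else x ! j - 1]"
  have x'V: "x' \<in> lattice_V ns"
    using assms j unfolding x'_def lattice_V_def by (auto simp: nth_list_update)
  have "{x, x'} \<in> lattice_E ns"
  proof (cases "x ! j < y ! j")
    case True
    then show ?thesis unfolding lattice_E_def
      using assms(1) x'V j len by (intro CollectI exI[of _ x] exI[of _ x']) (auto simp: x'_def)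
  next
    case False
    then have x': "x' = x[j := x ! j - 1]" and "Suc (x' ! j) = x ! j"
      using j len by (simp_all add: x'_def)
    then have "{x', x} \<in> lattice_E ns" unfolding lattice_E_def
      using assms(1) x'V j len by (intro CollectI exI[of _ x'] exI[of _ x]) (simp add: nth_list_update)
    then show ?thesis by (simp add: insert_commute)
  qed
  moreover have "Suc (l1_dist x' y) = l1_dist x y"
  proof -
    have "nat_dist (x ! j) (y ! j) = Suc (nat_dist (x' ! j) (y ! j))"
      using j len by (auto simp: x'_def nat_dist_def)
    moreover have "l1_dist z y = nat_dist (z ! j) (y ! j) + (\<Sum>l\<in>{..<length ns} - {j}. nat_dist (z ! l) (y ! l))"
      if "length z = length ns" for z
      unfolding l1_dist_def that using j by (simp add: sum.remove)
    moreover have "(\<Sum>l\<in>{..<length ns} - {j}. nat_dist (x' ! l) (y ! l)) =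
        (\<Sum>l\<in>{..<length ns} - {j}. nat_dist (x ! l) (y ! l))"
      by (rule sum.cong) (auto simp: x'_def)
    ultimately show ?thesis using len by (simp add: x'_def)
  qed
  ultimately show ?thesis using x'V by blast
qed

lemma lattice_walk_exists:
  assumes "x \<in> lattice_V ns" "y \<in> lattice_V ns"
  shows "\<exists>xs. walk (lattice_V ns) (lattice_E ns) xs \<and> hd xs = x \<and> last xs = y \<and>
    length xs = Suc (l1_dist x y)"
  using assms
proof (induction "l1_dist x y" arbitrary: x)
  case 0
  then have "x = y" using l1_dist_eq_0_iff lattice_V_length by metis
  then show ?case using 0 by (intro exI[of _ "[x]"]) simp
next
  case (Suc d)
  then have "x \<noteq> y" by (metis l1_dist_eq_0_iff nat.distinct(1))
  then obtain x' where x': "{x, x'} \<in> lattice_E ns" "x' \<in> lattice_V ns" "Suc (l1_dist x' y) = l1_dist x y"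
    using lattice_step_towards Suc.prems by blast
  then obtain xs where xs: "walk (lattice_V ns) (lattice_E ns) xs" "hd xs = x'" "last xs = y"
    "length xs = Suc (l1_dist x' y)"
    using Suc by (metis Suc_inject)
  then obtain rest where "xs = x' # rest" by (cases xs) (auto simp: walk_def)
  with xs x' Suc.prems(1) show ?case
    by (intro exI[of _ "x # xs"]) (auto simp: walk_Cons_Cons)
qed

lemma connected_lattice: "lattice_V ns \<noteq> {} \<Longrightarrow> connected_graph (lattice_V ns) (lattice_E ns)"
  unfolding connected_graph_def using lattice_walk_exists by blast

lemma gdist_lattice:
  assumes "x \<in> lattice_V ns" "y \<in> lattice_V ns"
  shows "gdist (lattice_V ns) (lattice_E ns) x y = l1_dist x y"
proof -
  obtain xs where "walk (lattice_V ns) (lattice_E ns) xs" "hd xs = x" "last xs = y"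
    "length xs = Suc (l1_dist x y)" using lattice_walk_exists[OF assms] by blast
  moreover obtain ys where "walk (lattice_V ns) (lattice_E ns) ys" "hd ys = x" "last ys = y"
    "length ys = Suc (gdist (lattice_V ns) (lattice_E ns) x y)"
    using shortest_walk_exists[OF connected_lattice assms] assms by blast
  ultimately show ?thesis using gdist_less_length l1_dist_less_length_walk
    by (metis Suc_less_eq le_antisym less_Suc_eq_le)
qed

lemma mem_interval_lattice_iff:
  assumes "x \<in> lattice_V ns" "y \<in> lattice_V ns"
  shows "w \<in> interval (lattice_V ns) (lattice_E ns) x y \<longleftrightarrow>
     w \<in> lattice_V ns \<and> (\<forall>j<length ns. min (x ! j) (y ! j) \<le> w ! j \<and> w ! j \<le> max (x ! j) (y ! j))"
proof -
  have "connected_graph (lattice_V ns) (lattice_E ns)" using assms connected_lattice by blast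
  then have "w \<in> interval (lattice_V ns) (lattice_E ns) x y \<longleftrightarrow>
      w \<in> lattice_V ns \<and> l1_dist x w + l1_dist w y = l1_dist x y"
    by (simp add: mem_interval_iff assms gdist_lattice cong: conj_cong)
  also have "\<dots> \<longleftrightarrow> w \<in> lattice_V ns \<and>
      (\<forall>j<length ns. min (x ! j) (y ! j) \<le> w ! j \<and> w ! j \<le> max (x ! j) (y ! j))"
    using l1_dist_between_iff[of x "length ns" y w] lattice_V_length assms
    by (auto simp: nat_dist_between_iff)
  finally show ?thesis .
qed

definition median3 :: "nat \<Rightarrow> nat \<Rightarrow> nat \<Rightarrow> nat" where
  "median3 a b c = max (min a b) (min (max a b) c)"

lemma median3_iff:
  "(min a b \<le> w \<and> w \<le> max a b) \<and> (min b c \<le> w \<and> w \<le> max b c) \<and> (min c a \<le> w \<and> w \<le> max c a)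
   \<longleftrightarrow> w = median3 a b c"
  by (auto simp: median3_def min_def max_def)

lemma median_graph_lattice:
  assumes "lattice_V ns \<noteq> {}"
  shows "median_graph (lattice_V ns) (lattice_E ns)"
  unfolding median_graph_def
proof (intro conjI ballI graph_lattice connected_lattice[OF assms])
  fix x y z assume xyz: "x \<in> lattice_V ns" "y \<in> lattice_V ns" "z \<in> lattice_V ns"
  define m where "m = map (\<lambda>j. median3 (x ! j) (y ! j) (z ! j)) [0..<length ns]"
  have "m \<in> lattice_V ns" using xyz unfolding lattice_V_def m_def
    by (auto simp: median3_def min_def max_def)
  have "w \<in> interval (lattice_V ns) (lattice_E ns) x y \<inter> interval (lattice_V ns) (lattice_E ns) y z \<inter>
      interval (lattice_V ns) (lattice_E ns) z x \<longleftrightarrow>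
      w \<in> lattice_V ns \<and> (\<forall>j<length ns. w ! j = median3 (x ! j) (y ! j) (z ! j))" for w
    by (auto simp: mem_interval_lattice_iff xyz median3_iff[symmetric])
  also have "\<dots> w \<longleftrightarrow> w = m" for w
    using \<open>m \<in> lattice_V ns\<close> lattice_V_length by (auto simp: m_def intro: nth_equalityI)
  finally have "interval (lattice_V ns) (lattice_E ns) x y \<inter> interval (lattice_V ns) (lattice_E ns) y z \<inter>
      interval (lattice_V ns) (lattice_E ns) z x = {m}" by blast
  then show "card (interval (lattice_V ns) (lattice_E ns) x y \<inter> interval (lattice_V ns) (lattice_E ns) y z \<inter>
      interval (lattice_V ns) (lattice_E ns) z x) = 1" by simp
qed

section \<open>Path decompositions\<close>

definition contiguous :: "nat set \<Rightarrow> bool" where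
  "contiguous T \<longleftrightarrow> (\<forall>a\<in>T. \<forall>b\<in>T. {a..b} \<subseteq> T)"

lemma intermediate_value_list:
  assumes "xs \<noteq> []" "\<forall>k. Suc k < length xs \<longrightarrow> xs ! Suc k \<le> Suc (xs ! k)"
    and "hd xs \<le> t" "t \<le> last xs"
  shows "t \<in> set xs"
  using assms
proof (induction xs)
  case (Cons x xs)
  show ?case
  proof (cases "xs = [] \<or> t = x")
    case False
    have "\<forall>k. Suc k < length xs \<longrightarrow> xs ! Suc k \<le> Suc (xs ! k)"
      using Cons.prems(2) by (metis Suc_less_eq length_Cons nth_Cons_Suc)
    moreover have "hd xs \<le> Suc x" using Cons.prems(2)[rule_format, of 0] False by (cases xs) auto
    ultimately show ?thesis using Cons False by auto
  qed (use Cons.prems in auto)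
qed simp

lemma walk_path_upt:
  assumes "a \<le> b" "b < n" "{a..b} \<subseteq> T"
  shows "walk T {e \<in> path_E n. e \<subseteq> T} [a..<Suc b]"
  unfolding walk_def
proof (intro conjI allI impI)
  fix k assume k: "Suc k < length [a..<Suc b]"
  then have "[a..<Suc b] ! k = a + k" "[a..<Suc b] ! Suc k = Suc (a + k)" by (simp_all del: upt_Suc)
  moreover have "{a + k, Suc (a + k)} \<in> path_E n" using k assms unfolding path_E_def by auto
  moreover have "{a + k, Suc (a + k)} \<subseteq> T" using k assms by auto
  ultimately show "{[a..<Suc b] ! k, [a..<Suc b] ! Suc k} \<in> {e \<in> path_E n. e \<subseteq> T}" by simp
qed (use assms in auto)

lemma connected_path_subgraph_iff:
  assumes "T \<subseteq> {..<n}"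
  shows "connected_graph T {e \<in> path_E n. e \<subseteq> T} \<longleftrightarrow> T \<noteq> {} \<and> contiguous T"
proof
  assume conn: "connected_graph T {e \<in> path_E n. e \<subseteq> T}"
  have "contiguous T" unfolding contiguous_def
  proof (intro ballI subsetI)
    fix a b t assume ab: "a \<in> T" "b \<in> T" "t \<in> {a..b}"
    obtain xs where xs: "walk T {e \<in> path_E n. e \<subseteq> T} xs" "hd xs = a" "last xs = b"
      using conn ab unfolding connected_graph_def by blast
    have "xs ! Suc k \<le> Suc (xs ! k)" if "Suc k < length xs" for k
    proof -
      have "{xs ! k, xs ! Suc k} \<in> path_E n" using xs(1) that unfolding walk_def by blast
      then show ?thesis unfolding path_E_def by (auto simp: doubleton_eq_iff)
    qed
    then have "t \<in> set xs" using intermediate_value_list xs ab by (auto simp: walk_def)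
    then show "t \<in> T" using xs(1) by (auto simp: walk_def)
  qed
  then show "T \<noteq> {} \<and> contiguous T" using conn by (simp add: connected_graph_def)
next
  assume T: "T \<noteq> {} \<and> contiguous T"
  have walk: "\<exists>xs. walk T {e \<in> path_E n. e \<subseteq> T} xs \<and> hd xs = a \<and> last xs = b"
    if "a \<in> T" "b \<in> T" "a \<le> b" for a b
  proof -
    have "{a..b} \<subseteq> T" "b < n" using that assms T by (auto simp: contiguous_def)
    with walk_path_upt[of a b n T] that show ?thesis
      by (intro exI[of _ "[a..<Suc b]"]) (simp del: upt_Suc add: hd_upt last_upt)
  qed
  have "\<exists>xs. walk T {e \<in> path_E n. e \<subseteq> T} xs \<and> hd xs = a \<and> last xs = b"
    if ab: "a \<in> T" "b \<in> T" for a b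
  proof (cases "a \<le> b")
    case False
    then obtain xs where xs: "walk T {e \<in> path_E n. e \<subseteq> T} xs" "hd xs = b" "last xs = a"
      using walk ab by fastforce
    then have "xs \<noteq> []" by (simp add: walk_def)
    with xs walk_rev[OF xs(1)] show ?thesis by (intro exI[of _ "rev xs"]) (simp add: hd_rev last_rev)
  qed (use walk ab in blast)
  then show "connected_graph T {e \<in> path_E n. e \<subseteq> T}" using T unfolding connected_graph_def by blast
qed

lemma path_decomp_iff:
  "path_decomp V E n Z \<longleftrightarrow> 1 \<le> n \<and> (\<forall>t<n. Z t \<subseteq> V) \<and> (\<forall>e\<in>E. \<exists>t<n. e \<subseteq> Z t) \<and>
     (\<forall>v\<in>V. {t. t < n \<and> v \<in> Z t} \<noteq> {} \<and> contiguous {t. t < n \<and> v \<in> Z t})"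
proof -
  have "path_V n = {..<n}" by (simp add: path_V_def atLeast0LessThan)
  moreover have "{u \<in> {..<n}. v \<in> Z u} = {t. t < n \<and> v \<in> Z t}" for v by auto
  moreover have "{t. t < n \<and> v \<in> Z t} \<subseteq> {..<n}" for v by auto
  ultimately show ?thesis unfolding path_decomp_def by (simp add: connected_path_subgraph_iff) blast
qed

lemma path_decomp_single_bag: "graph V E \<Longrightarrow> path_decomp V E 1 (\<lambda>_. V)"
  by (auto simp: path_decomp_iff graph_def contiguous_def)

section \<open>Relabelling the vertices of a graph\<close>

locale graph_relabelling =
  fixes V :: "'b set" and E :: "'b set set" and g :: "'b \<Rightarrow> 'c"
  assumes graph: "graph V E" and inj: "inj_on g V"
begin

abbreviation "V' \<equiv> g ` V"
abbreviation "E' \<equiv> (\<lambda>e. g ` e) ` E"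

lemma relabelled_edge_iff:
  assumes "x \<in> V" "y \<in> V"
  shows "{g x, g y} \<in> E' \<longleftrightarrow> {x, y} \<in> E"
proof
  assume "{g x, g y} \<in> E'"
  then obtain e where e: "e \<in> E" "{g x, g y} = g ` e" by auto
  obtain a b where ab: "a \<in> V" "b \<in> V" "e = {a, b}" using graph e(1) unfolding graph_def by blast
  then have "(g x = g a \<and> g y = g b) \<or> (g x = g b \<and> g y = g a)"
    using e by (auto simp: doubleton_eq_iff)
  then have "(x = a \<and> y = b) \<or> (x = b \<and> y = a)" using inj assms ab by (auto dest: inj_onD)
  then show "{x, y} \<in> E" using e(1) ab(3) by (metis insert_commute)
next
  assume "{x, y} \<in> E"
  then have "g ` {x, y} \<in> E'" by (rule imageI)
  then show "{g x, g y} \<in> E'" by simp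
qed

lemma walk_map_iff:
  assumes "set xs \<subseteq> V"
  shows "walk V' E' (map g xs) \<longleftrightarrow> walk V E xs"
proof -
  have "(\<forall>k. Suc k < length xs \<longrightarrow> {g (xs ! k), g (xs ! Suc k)} \<in> E') \<longleftrightarrow>
        (\<forall>k. Suc k < length xs \<longrightarrow> {xs ! k, xs ! Suc k} \<in> E)"
    using relabelled_edge_iff assms by (auto simp: subset_iff)
  then show ?thesis using assms unfolding walk_def by auto
qed

lemma relabelled_walk_iff:
  "walk V' E' ys \<longleftrightarrow> (\<exists>xs. set xs \<subseteq> V \<and> walk V E xs \<and> ys = map g xs)"
proof
  assume w: "walk V' E' ys"
  then have "set ys \<subseteq> V'" by (simp add: walk_def)
  then have "map (g \<circ> inv_into V g) ys = ys" "set (map (inv_into V g) ys) \<subseteq> V"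
    by (auto intro!: map_idI simp: f_inv_into_f inv_into_into)
  with w walk_map_iff show "\<exists>xs. set xs \<subseteq> V \<and> walk V E xs \<and> ys = map g xs"
    by (metis map_map)
qed (use walk_map_iff in blast)

lemma relabelled_walk_ends:
  assumes "set xs \<subseteq> V" "walk V E xs" "x \<in> V" "y \<in> V"
  shows "hd (map g xs) = g x \<and> last (map g xs) = g y \<longleftrightarrow> hd xs = x \<and> last xs = y"
proof -
  have "xs \<noteq> []" "hd xs \<in> V" "last xs \<in> V" using assms(1,2) by (auto simp: walk_def)
  then show ?thesis using inj_onD[OF inj] assms(3,4) by (auto simp: hd_map last_map)
qed

lemma relabelled_walk_between_iff:
  assumes "x \<in> V" "y \<in> V"
  shows "walk V' E' ys \<and> hd ys = g x \<and> last ys = g y \<longleftrightarrow>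
    (\<exists>xs. walk V E xs \<and> hd xs = x \<and> last xs = y \<and> ys = map g xs)"
proof
  assume ys: "walk V' E' ys \<and> hd ys = g x \<and> last ys = g y"
  then obtain xs where "set xs \<subseteq> V" "walk V E xs" "ys = map g xs"
    unfolding relabelled_walk_iff by blast
  with ys relabelled_walk_ends[OF this(1,2) assms]
  show "\<exists>xs. walk V E xs \<and> hd xs = x \<and> last xs = y \<and> ys = map g xs" by blast
next
  assume "\<exists>xs. walk V E xs \<and> hd xs = x \<and> last xs = y \<and> ys = map g xs"
  then obtain xs where xs: "walk V E xs" "hd xs = x" "last xs = y" "ys = map g xs" by blast
  moreover have "set xs \<subseteq> V" using xs(1) by (simp add: walk_def)
  ultimately show "walk V' E' ys \<and> hd ys = g x \<and> last ys = g y"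
    using walk_map_iff relabelled_walk_ends[OF _ xs(1) assms] by blast
qed

lemma gdist_relabelled:
  assumes "x \<in> V" "y \<in> V"
  shows "gdist V' E' (g x) (g y) = gdist V E x y"
proof -
  have "(\<exists>ys. (walk V' E' ys \<and> hd ys = g x \<and> last ys = g y) \<and> length ys = Suc n) \<longleftrightarrow>
        (\<exists>xs. walk V E xs \<and> hd xs = x \<and> last xs = y \<and> length xs = Suc n)" for n
    unfolding relabelled_walk_between_iff[OF assms] by auto
  then show ?thesis unfolding gdist_def by simp
qed

lemma interval_relabelled:
  assumes "x \<in> V" "y \<in> V"
  shows "interval V' E' (g x) (g y) = g ` interval V E x y"
proof -
  have "(\<exists>ys. (walk V' E' ys \<and> hd ys = g x \<and> last ys = g y) \<and>
      length ys = Suc (gdist V E x y) \<and> w \<in> set ys) \<longleftrightarrow>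
    (\<exists>xs. walk V E xs \<and> hd xs = x \<and> last xs = y \<and> length xs = Suc (gdist V E x y) \<and> w \<in> g ` set xs)"
    for w
    unfolding relabelled_walk_between_iff[OF assms] by auto
  then show ?thesis unfolding interval_def gdist_relabelled[OF assms] by auto
qed

lemma graph_relabelled: "graph V' E'"
  using graph inj unfolding graph_def by (fastforce dest: inj_onD)

lemma connected_relabelled: "connected_graph V E \<Longrightarrow> connected_graph V' E'"
  unfolding connected_graph_def by (auto simp: relabelled_walk_between_iff)

lemma median_graph_relabelled:
  assumes "median_graph V E"
  shows "median_graph V' E'"
  unfolding median_graph_def
proof (intro conjI ballI graph_relabelled connected_relabelled)
  show "connected_graph V E" using assms by (simp add: median_graph_def)
next
  fix u v w assume "u \<in> V'" "v \<in> V'" "w \<in> V'"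
  then obtain x y z where xyz: "x \<in> V" "y \<in> V" "z \<in> V" "u = g x" "v = g y" "w = g z" by blast
  let ?I = "interval V E x y \<inter> interval V E y z \<inter> interval V E z x"
  have "interval V' E' u v \<inter> interval V' E' v w \<inter> interval V' E' w u = g ` ?I"
    using interval_subset[of V E] by (simp add: xyz interval_relabelled inj_on_image_Int[OF inj] le_infI1)
  moreover have "inj_on g ?I" using interval_subset[of V E] by (intro inj_on_subset[OF inj]) auto
  ultimately show "card (interval V' E' u v \<inter> interval V' E' v w \<inter> interval V' E' w u) = 1"
    using assms xyz unfolding median_graph_def by (simp add: card_image)
qed

lemma convex_relabelled:
  assumes "convex V E S"
  shows "convex V' E' (g ` S)"
  unfolding convex_def
proof (intro conjI ballI)
  show "g ` S \<subseteq> V'" using assms by (auto simp: convex_def)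
next
  fix u v assume "u \<in> g ` S" "v \<in> g ` S"
  then obtain x y where xy: "x \<in> S" "y \<in> S" "u = g x" "v = g y" by blast
  then have "x \<in> V" "y \<in> V" "interval V E x y \<subseteq> S" using assms by (auto simp: convex_def)
  then show "interval V' E' u v \<subseteq> g ` S" using xy by (auto simp: interval_relabelled)
qed

lemma inv_into_relabel [simp]: "x \<in> V \<Longrightarrow> inv_into V g (g x) = x"
  by (rule inv_into_f_f[OF inj])

lemma median_decomp_relabelled:
  assumes "median_decomp U F V E X"
  shows "median_decomp U F V' E' (X \<circ> inv_into V g)"
  unfolding median_decomp_def
proof (intro conjI ballI)
  show "median_graph V' E'" using assms median_graph_relabelled by (simp add: median_decomp_def)
  show "(X \<circ> inv_into V g) a \<subseteq> U" if "a \<in> V'" for a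
    using assms that by (auto simp: median_decomp_def)
  show "\<exists>a\<in>V'. e \<subseteq> (X \<circ> inv_into V g) a" if "e \<in> F" for e
    using assms that by (fastforce simp: median_decomp_def)
next
  fix v assume "v \<in> U"
  moreover have "{a \<in> V'. v \<in> (X \<circ> inv_into V g) a} = g ` {a \<in> V. v \<in> X a}" by auto
  ultimately show "{a \<in> V'. v \<in> (X \<circ> inv_into V g) a} \<noteq> {}"
    and "convex V' E' {a \<in> V'. v \<in> (X \<circ> inv_into V g) a}"
    using assms convex_relabelled by (simp_all add: median_decomp_def)
qed

lemma width_relabelled: "width V' (X \<circ> inv_into V g) = width V X"
  unfolding width_def image_image by simp

lemma lattice_dim_le_relabelled:
  assumes "lattice_dim_le V E k"
  shows "lattice_dim_le V' E' k"
proof -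
  obtain ns f where "length ns \<le> k" "\<forall>j<length ns. 1 \<le> ns ! j"
    "isometric_embedding V E (lattice_V ns) (lattice_E ns) f"
    using assms unfolding lattice_dim_le_def by blast
  moreover have "isometric_embedding V' E' (lattice_V ns) (lattice_E ns) (f \<circ> inv_into V g)"
    using calculation(3) by (auto simp: isometric_embedding_def gdist_relabelled)
  ultimately show ?thesis unfolding lattice_dim_le_def by blast
qed

end

section \<open>Path decompositions from lattice decompositions\<close>

lemma Max_Collect_le:
  fixes h :: "'u \<Rightarrow> nat"
  assumes "\<exists>u. P u" "\<And>u. P u \<Longrightarrow> h u \<le> w"
  shows "Max {h u | u. P u} \<le> w"
proof -
  have bounded: "{h u | u. P u} \<subseteq> {..w}" using assms(2) by auto
  then have "finite {h u | u. P u}" by (rule finite_subset) simp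
  moreover have "{h u | u. P u} \<noteq> {}" using assms(1) by blast
  ultimately show ?thesis using bounded by (simp add: Max_le_iff subset_iff)
qed

lemma median_gate:
  assumes median: "median_graph V E" and S: "convex V E S" and a: "a \<in> V"
    and b: "b \<in> S" and closest: "\<forall>b'\<in>S. gdist V E a b \<le> gdist V E a b'" and c: "c \<in> S"
  shows "gdist V E a b + gdist V E b c = gdist V E a c"
proof -
  have conn: "connected_graph V E" using median by (simp add: median_graph_def)
  have bV: "b \<in> V" and cV: "c \<in> V" using S b c by (auto simp: convex_def)
  have "card (interval V E a b \<inter> interval V E b c \<inter> interval V E c a) = 1"
    using median a bV cV unfolding median_graph_def by blast
  then obtain m where m: "m \<in> interval V E a b" "m \<in> interval V E b c" "m \<in> interval V E c a"
    by (metis IntE card_1_singletonE insertI1)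
  have "m \<in> S" using m(2) S b c unfolding convex_def by blast
  have mV: "m \<in> V" and "gdist V E a m + gdist V E m b = gdist V E a b"
    using m(1) mem_interval_iff[OF conn a bV] by auto
  moreover have "gdist V E a b \<le> gdist V E a m" using closest \<open>m \<in> S\<close> by blast
  ultimately have "m = b" using gdist_eq_0_iff[OF conn mV bV] by simp
  then have "gdist V E c b + gdist V E b a = gdist V E c a"
    using m(3) mem_interval_iff[OF conn cV a] by auto
  then show ?thesis using gdist_sym[OF conn] a bV cV by simp
qed

locale lattice_embedded_decomp =
  fixes V :: "'a set" and E :: "'a set set" and VM :: "'b set" and EM :: "'b set set"
    and X :: "'b \<Rightarrow> 'a set" and ns :: "nat list" and f :: "'b \<Rightarrow> nat list"
  assumes graph: "graph V E" and decomp: "median_decomp V E VM EM X"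
    and embedding: "isometric_embedding VM EM (lattice_V ns) (lattice_E ns) f"
begin

lemma median: "median_graph VM EM"
  using decomp by (simp add: median_decomp_def)

lemma connected: "connected_graph VM EM"
  using median by (simp add: median_graph_def)

lemma finite_VM: "finite VM"
  using median by (simp add: median_graph_def graph_def)

lemma VM_nonempty: "VM \<noteq> {}"
  using connected by (simp add: connected_graph_def)

lemma bag_subset: "a \<in> VM \<Longrightarrow> X a \<subseteq> V"
  using decomp by (simp add: median_decomp_def)

lemma embedding_in_lattice: "a \<in> VM \<Longrightarrow> f a \<in> lattice_V ns"
  using embedding by (auto simp: isometric_embedding_def)

lemma length_embedding: "a \<in> VM \<Longrightarrow> length (f a) = length ns"
  using embedding_in_lattice lattice_V_length by blast

lemma coordinate_less: "a \<in> VM \<Longrightarrow> j < length ns \<Longrightarrow> f a ! j < ns ! j"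
  using embedding_in_lattice by (auto simp: lattice_V_def)

lemma gdist_eq_l1_dist: "a \<in> VM \<Longrightarrow> b \<in> VM \<Longrightarrow> gdist VM EM a b = l1_dist (f a) (f b)"
  using embedding embedding_in_lattice gdist_lattice by (metis isometric_embedding_def)

lemma coordinate_step:
  assumes "{a, b} \<in> EM" "a \<in> VM" "b \<in> VM" "j < length ns"
  shows "f b ! j \<le> Suc (f a ! j)"
proof -
  have "walk VM EM [a, b]" using assms by (simp add: walk_Cons_Cons)
  then have "gdist VM EM a b < 2" using gdist_less_length[of VM EM "[a, b]" a b] by simp
  then have "l1_dist (f a) (f b) \<le> 1" using gdist_eq_l1_dist assms by simp
  moreover have "nat_dist (f a ! j) (f b ! j) \<le> l1_dist (f a) (f b)"
    unfolding l1_dist_def using assms length_embedding by (intro member_le_sum) auto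
  ultimately show ?thesis by (simp add: nat_dist_def)
qed

definition trace :: "'a \<Rightarrow> 'b set" where
  "trace v = {a \<in> VM. v \<in> X a}"

lemma trace_convex: "v \<in> V \<Longrightarrow> convex VM EM (trace v)"
  using decomp by (simp add: median_decomp_def trace_def)

lemma trace_nonempty: "v \<in> V \<Longrightarrow> trace v \<noteq> {}"
  using decomp by (simp add: median_decomp_def trace_def)

lemma trace_subset: "trace v \<subseteq> VM"
  by (auto simp: trace_def)

text \<open>Along a shortest walk between two elements of the trace, a coordinate moves by steps
  of at most one, so it passes through every intermediate value.\<close>

lemma coordinate_trace_contiguous:
  assumes v: "v \<in> V" and j: "j < length ns"
  shows "contiguous ((\<lambda>a. f a ! j) ` trace v)"
  unfolding contiguous_def
proof (intro ballI subsetI)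
  fix t1 t2 t assume "t1 \<in> (\<lambda>a. f a ! j) ` trace v" "t2 \<in> (\<lambda>a. f a ! j) ` trace v" "t \<in> {t1..t2}"
  then obtain a1 a2 where a: "a1 \<in> trace v" "a2 \<in> trace v" "f a1 ! j \<le> t" "t \<le> f a2 ! j" by auto
  then have "a1 \<in> VM" "a2 \<in> VM" using trace_subset by auto
  then obtain xs where xs: "walk VM EM xs" "hd xs = a1" "last xs = a2"
      "length xs = Suc (gdist VM EM a1 a2)"
    using shortest_walk_exists[OF connected] by blast
  have "map (\<lambda>a. f a ! j) xs ! Suc k \<le> Suc (map (\<lambda>a. f a ! j) xs ! k)"
    if "Suc k < length (map (\<lambda>a. f a ! j) xs)" for k
    using xs(1) that coordinate_step j unfolding walk_def by (simp add: subset_iff)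
  moreover have "xs \<noteq> []" using xs(1) by (simp add: walk_def)
  ultimately have "t \<in> (\<lambda>a. f a ! j) ` set xs"
    using intermediate_value_list[of "map (\<lambda>a. f a ! j) xs" t] xs a by (simp add: hd_map last_map)
  moreover have "set xs \<subseteq> interval VM EM a1 a2" using xs unfolding interval_def by blast
  moreover have "interval VM EM a1 a2 \<subseteq> trace v" using trace_convex[OF v] a unfolding convex_def by blast
  ultimately show "t \<in> (\<lambda>a. f a ! j) ` trace v" by blast
qed

lemma closest_in_trace:
  assumes v: "v \<in> V" and a0: "a0 \<in> VM" and p: "length p = length ns"
    and closest: "\<forall>a\<in>VM. l1_dist (f a0) p \<le> l1_dist (f a) p"
    and hits: "\<forall>j<length ns. \<exists>c\<in>trace v. f c ! j = p ! j"
  shows "a0 \<in> trace v"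
proof -
  obtain b where b: "b \<in> trace v" and gate: "\<forall>b'\<in>trace v. gdist VM EM a0 b \<le> gdist VM EM a0 b'"
    using ex_has_least_nat[of "\<lambda>b. b \<in> trace v" _ "gdist VM EM a0"] trace_nonempty[OF v] by blast
  have bV: "b \<in> VM" using b trace_subset by auto
  have "nat_dist (f a0 ! j) (f b ! j) + nat_dist (f b ! j) (p ! j) = nat_dist (f a0 ! j) (p ! j)"
    if j: "j < length ns" for j
  proof -
    obtain c where c: "c \<in> trace v" "f c ! j = p ! j" using hits j by blast
    then have cV: "c \<in> VM" using trace_subset by auto
    have "l1_dist (f a0) (f b) + l1_dist (f b) (f c) = l1_dist (f a0) (f c)"
      using median_gate[OF median trace_convex[OF v] a0 b gate c(1)] gdist_eq_l1_dist a0 bV cV by simp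
    then show ?thesis
      using l1_dist_between_iff[of "f a0" "length ns" "f c" "f b"] length_embedding a0 bV cV j
      by (simp flip: c(2))
  qed
  then have "l1_dist (f a0) (f b) + l1_dist (f b) p = l1_dist (f a0) p"
    using l1_dist_between_iff[of "f a0" "length ns" p "f b"] length_embedding a0 bV p by simp
  then have "l1_dist (f a0) (f b) = 0" using closest bV by fastforce
  then have "gdist VM EM a0 b = 0" using gdist_eq_l1_dist[OF a0 bV] by simp
  then show ?thesis using gdist_eq_0_iff[OF connected a0 bV] b by simp
qed

definition coordinate_length :: "nat \<Rightarrow> nat" where
  "coordinate_length j = (if j < length ns then ns ! j else 1)"

definition coordinate_bag :: "nat \<Rightarrow> nat \<Rightarrow> 'a set" where
  "coordinate_bag j t = (if j < length ns then \<Union>{X a | a. a \<in> VM \<and> f a ! j = t} else V)"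

lemma coordinate_bag_subset: "coordinate_bag j t \<subseteq> V"
  using bag_subset by (auto simp: coordinate_bag_def)

lemma path_decomp_coordinate: "path_decomp V E (coordinate_length j) (coordinate_bag j)"
proof (cases "j < length ns")
  case True
  have trace: "{t. t < coordinate_length j \<and> v \<in> coordinate_bag j t} = (\<lambda>a. f a ! j) ` trace v" for v
    using True coordinate_less by (auto simp: coordinate_length_def coordinate_bag_def trace_def)
  obtain a1 where "a1 \<in> VM" using VM_nonempty by blast
  then have "1 \<le> coordinate_length j" using True coordinate_less by (fastforce simp: coordinate_length_def)
  moreover have "\<exists>t<coordinate_length j. e \<subseteq> coordinate_bag j t" if "e \<in> E" for e
  proof -
    obtain a where "a \<in> VM" "e \<subseteq> X a" using decomp \<open>e \<in> E\<close> by (auto simp: median_decomp_def)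
    then show ?thesis using True coordinate_less
      by (intro exI[of _ "f a ! j"]) (auto simp: coordinate_length_def coordinate_bag_def)
  qed
  ultimately show ?thesis
    using coordinate_bag_subset coordinate_trace_contiguous True trace_nonempty
    by (simp add: path_decomp_iff trace)
next
  case False
  then have "coordinate_length j = 1" "coordinate_bag j = (\<lambda>_. V)"
    by (simp_all add: coordinate_length_def coordinate_bag_def fun_eq_iff)
  then show ?thesis using path_decomp_single_bag[OF graph] by simp
qed

lemma coordinate_bags_Inter_subset_bag:
  assumes "1 \<le> i" "length ns \<le> i"
  shows "\<exists>a\<in>VM. (\<Inter>j\<in>{..<i}. coordinate_bag j (u j)) \<subseteq> X a"
proof -
  define p where "p = map u [0..<length ns]"
  obtain a1 where "a1 \<in> VM" using VM_nonempty by blast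
  then obtain a0 where a0: "a0 \<in> VM" and closest: "\<forall>a\<in>VM. l1_dist (f a0) p \<le> l1_dist (f a) p"
    using ex_has_least_nat[of "\<lambda>a. a \<in> VM" a1 "\<lambda>a. l1_dist (f a) p"] by blast
  have "v \<in> X a0" if v: "v \<in> (\<Inter>j\<in>{..<i}. coordinate_bag j (u j))" for v
  proof -
    have "v \<in> coordinate_bag 0 (u 0)" using v assms(1) by simp
    then have "v \<in> V" using coordinate_bag_subset by blast
    moreover have "\<exists>c\<in>trace v. f c ! j = p ! j" if j: "j < length ns" for j
    proof -
      have "v \<in> coordinate_bag j (u j)" using v j assms(2) by simp
      then show ?thesis using j by (auto simp: coordinate_bag_def trace_def p_def)
    qed
    moreover have "length p = length ns" by (simp add: p_def)
    ultimately have "a0 \<in> trace v" using closest_in_trace a0 closest by blast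
    then show ?thesis by (simp add: trace_def)
  qed
  then show ?thesis using a0 by blast
qed

lemma Max_coordinate_bags_le_width:
  assumes "1 \<le> i" "length ns \<le> i"
  shows "Max {card (\<Inter>j\<in>{..<i}. coordinate_bag j (u j)) | u. \<forall>j<i. u j < coordinate_length j}
    \<le> width VM X"
proof (rule Max_Collect_le)
  show "\<exists>u. \<forall>j<i. u j < coordinate_length j"
    using path_decomp_coordinate unfolding path_decomp_def by (intro exI[of _ "\<lambda>_. 0"]) (simp add: Suc_le_eq)
next
  fix u
  obtain a where a: "a \<in> VM" "(\<Inter>j\<in>{..<i}. coordinate_bag j (u j)) \<subseteq> X a"
    using coordinate_bags_Inter_subset_bag[OF assms] by blast
  have "finite (X a)" using graph bag_subset[OF a(1)] finite_subset by (auto simp: graph_def)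
  then have "card (\<Inter>j\<in>{..<i}. coordinate_bag j (u j)) \<le> card (X a)" using a(2) by (rule card_mono)
  also have "\<dots> \<le> width VM X" unfolding width_def using finite_VM a(1) by simp
  finally show "card (\<Inter>j\<in>{..<i}. coordinate_bag j (u j)) \<le> width VM X" .
qed

end

section \<open>Lattice decompositions from path decompositions\<close>

lemma lattice_dim_le_lattice:
  "\<forall>j<length ns. 1 \<le> ns ! j \<Longrightarrow> lattice_dim_le (lattice_V ns) (lattice_E ns) (length ns)"
  unfolding lattice_dim_le_def isometric_embedding_def by (intro exI[of _ ns] exI[of _ id]) simp

locale path_decomp_tuple =
  fixes V :: "'a set" and E :: "'a set set" and i :: nat
    and n :: "nat \<Rightarrow> nat" and Z :: "nat \<Rightarrow> nat \<Rightarrow> 'a set"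
  assumes graph: "graph V E" and positive: "1 \<le> i"
    and decomps: "\<forall>j<i. path_decomp V E (n j) (Z j)"
begin

definition dims :: "nat list" where
  "dims = map n [0..<i]"

definition product_bag :: "nat list \<Rightarrow> 'a set" where
  "product_bag x = (\<Inter>j\<in>{..<i}. Z j (x ! j))"

lemma mem_lattice_dims_iff: "x \<in> lattice_V dims \<longleftrightarrow> length x = i \<and> (\<forall>j<i. x ! j < n j)"
  by (auto simp: lattice_V_def dims_def)

lemma path_decomp_component: "j < i \<Longrightarrow> 1 \<le> n j \<and> (\<forall>t<n j. Z j t \<subseteq> V) \<and> (\<forall>e\<in>E. \<exists>t<n j. e \<subseteq> Z j t) \<and>
    (\<forall>v\<in>V. {t. t < n j \<and> v \<in> Z j t} \<noteq> {} \<and> contiguous {t. t < n j \<and> v \<in> Z j t})"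
  using decomps by (simp add: path_decomp_iff)

lemma lattice_dims_nonempty: "lattice_V dims \<noteq> {}"
proof -
  have "replicate i 0 \<in> lattice_V dims" using path_decomp_component by (simp add: mem_lattice_dims_iff Suc_le_eq)
  then show ?thesis by blast
qed

lemma product_trace_convex:
  assumes v: "v \<in> V"
  shows "convex (lattice_V dims) (lattice_E dims) {x \<in> lattice_V dims. v \<in> product_bag x}"
  unfolding convex_def
proof (intro conjI ballI subsetI)
  fix x y w assume x: "x \<in> {x \<in> lattice_V dims. v \<in> product_bag x}"
    and y: "y \<in> {x \<in> lattice_V dims. v \<in> product_bag x}"
    and "w \<in> interval (lattice_V dims) (lattice_E dims) x y"
  then have w: "w \<in> lattice_V dims" "\<forall>j<i. min (x ! j) (y ! j) \<le> w ! j \<and> w ! j \<le> max (x ! j) (y ! j)"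
    by (simp_all add: mem_interval_lattice_iff dims_def)
  have "v \<in> Z j (w ! j)" if j: "j < i" for j
  proof -
    let ?T = "{t. t < n j \<and> v \<in> Z j t}"
    have "x ! j \<in> ?T" "y ! j \<in> ?T"
      using x y j by (auto simp: product_bag_def mem_lattice_dims_iff)
    moreover have "contiguous ?T" using path_decomp_component[OF j] v by blast
    ultimately have "{min (x ! j) (y ! j)..max (x ! j) (y ! j)} \<subseteq> ?T"
      unfolding contiguous_def by (simp add: min_def max_def)
    moreover have "w ! j \<in> {min (x ! j) (y ! j)..max (x ! j) (y ! j)}" using w(2) j by simp
    ultimately show ?thesis by blast
  qed
  then show "w \<in> {x \<in> lattice_V dims. v \<in> product_bag x}" using w(1) by (simp add: product_bag_def)
qed auto

lemma median_decomp_product: "median_decomp V E (lattice_V dims) (lattice_E dims) product_bag"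
  unfolding median_decomp_def
proof (intro conjI ballI median_graph_lattice lattice_dims_nonempty product_trace_convex)
  show "product_bag x \<subseteq> V" if "x \<in> lattice_V dims" for x
    using that positive path_decomp_component by (fastforce simp: product_bag_def mem_lattice_dims_iff)
next
  fix e assume "e \<in> E"
  then have "\<forall>j<i. \<exists>t<n j. e \<subseteq> Z j t" using path_decomp_component by blast
  then obtain t where "\<forall>j<i. t j < n j \<and> e \<subseteq> Z j (t j)" by metis
  then show "\<exists>x\<in>lattice_V dims. e \<subseteq> product_bag x"
    by (intro bexI[of _ "map t [0..<i]"]) (auto simp: product_bag_def mem_lattice_dims_iff)
next
  fix v assume "v \<in> V"
  then have "\<forall>j<i. \<exists>t<n j. v \<in> Z j t" using path_decomp_component by blast
  then obtain t where "\<forall>j<i. t j < n j \<and> v \<in> Z j (t j)" by metis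
  then have "map t [0..<i] \<in> {x \<in> lattice_V dims. v \<in> product_bag x}"
    by (auto simp: product_bag_def mem_lattice_dims_iff)
  then show "{x \<in> lattice_V dims. v \<in> product_bag x} \<noteq> {}" by blast
qed

lemma width_product:
  "width (lattice_V dims) product_bag = Max {card (\<Inter>j\<in>{..<i}. Z j (u j)) | u. \<forall>j<i. u j < n j}"
proof -
  have "(\<lambda>x. card (product_bag x)) ` lattice_V dims =
      {card (\<Inter>j\<in>{..<i}. Z j (u j)) | u. \<forall>j<i. u j < n j}"
  proof (intro equalityI subsetI)
    fix c assume "c \<in> (\<lambda>x. card (product_bag x)) ` lattice_V dims"
    then show "c \<in> {card (\<Inter>j\<in>{..<i}. Z j (u j)) | u. \<forall>j<i. u j < n j}"
      by (auto simp: product_bag_def mem_lattice_dims_iff)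
  next
    fix c assume "c \<in> {card (\<Inter>j\<in>{..<i}. Z j (u j)) | u. \<forall>j<i. u j < n j}"
    then obtain u where "\<forall>j<i. u j < n j" "c = card (\<Inter>j\<in>{..<i}. Z j (u j))" by blast
    then show "c \<in> (\<lambda>x. card (product_bag x)) ` lattice_V dims"
      by (intro image_eqI[of _ _ "map u [0..<i]"]) (auto simp: product_bag_def mem_lattice_dims_iff)
  qed
  then show ?thesis by (simp add: width_def)
qed

lemma lattice_dim_le_dims: "lattice_dim_le (lattice_V dims) (lattice_E dims) i"
  using lattice_dim_le_lattice[of dims] path_decomp_component by (simp add: dims_def)

text \<open>The lattice has list vertices, whereas the definition of the latticewidth asks for
  natural numbers; an injective relabelling bridges the gap.\<close>

lemma exists_nat_lattice_decomp:
  "\<exists>(VM :: nat set) EM X. median_decomp V E VM EM X \<and> lattice_dim_le VM EM i \<and>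
     width VM X = Max {card (\<Inter>j\<in>{..<i}. Z j (u j)) | u. \<forall>j<i. u j < n j}"
proof -
  obtain g :: "nat list \<Rightarrow> nat" where "inj_on g (lattice_V dims)"
    using finite_imp_inj_to_nat_seg[OF finite_lattice_V] by blast
  then interpret graph_relabelling "lattice_V dims" "lattice_E dims" g
    using graph_lattice by unfold_locales
  have "width V' (product_bag \<circ> inv_into (lattice_V dims) g) =
      Max {card (\<Inter>j\<in>{..<i}. Z j (u j)) | u. \<forall>j<i. u j < n j}"
    by (simp add: width_relabelled width_product)
  then show ?thesis
    using median_decomp_relabelled[OF median_decomp_product] lattice_dim_le_relabelled[OF lattice_dim_le_dims]
    by blast
qed

end

lemma lattice_decomp_of_path_decomps:
  assumes "graph V E" "1 \<le> i" "\<forall>j<i. path_decomp V E (n j) (Z j)"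
  shows "\<exists>(VM :: nat set) EM X. median_decomp V E VM EM X \<and> lattice_dim_le VM EM i \<and>
     width VM X = Max {card (\<Inter>j\<in>{..<i}. Z j (u j)) | u. \<forall>j<i. u j < n j}"
proof -
  interpret path_decomp_tuple V E i n Z
    using assms by unfold_locales
  show ?thesis by (rule exists_nat_lattice_decomp)
qed

lemma exists_path_decomps: "graph V E \<Longrightarrow> \<exists>n Z. \<forall>j<i. path_decomp V E (n j) (Z j)"
  by (drule path_decomp_single_bag) (intro exI[of _ "\<lambda>_. 1"] exI[of _ "\<lambda>_ _. V"], simp)

lemma path_decomps_of_lattice_decomp:
  assumes "graph V E" "1 \<le> i" and "median_decomp V E VM EM X" "lattice_dim_le VM EM i"
  shows "\<exists>(n :: nat \<Rightarrow> nat) (Z :: nat \<Rightarrow> nat \<Rightarrow> 'a set). (\<forall>j<i. path_decomp V E (n j) (Z j)) \<and>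
    Max {card (\<Inter>j\<in>{..<i}. Z j (u j)) | u. \<forall>j<i. u j < n j} \<le> width VM X"
proof -
  obtain ns f where "length ns \<le> i" "isometric_embedding VM EM (lattice_V ns) (lattice_E ns) f"
    using assms(4) unfolding lattice_dim_le_def by blast
  then interpret lattice_embedded_decomp V E VM EM X ns f
    using assms by unfold_locales
  show ?thesis
    using path_decomp_coordinate Max_coordinate_bags_le_width assms(2) \<open>length ns \<le> i\<close> by blast
qed

lemma Least_eq_of_bounds:
  fixes P Q :: "nat \<Rightarrow> bool"
  assumes "\<exists>k. P k" and "\<And>w. P w \<Longrightarrow> Q w" and "\<And>w. Q w \<Longrightarrow> \<exists>w'\<le>w. P w'"
  shows "Least Q = Least P"
proof -
  have "Q (Least P)" using assms(1,2) by (blast intro: LeastI)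
  then obtain w' where "w' \<le> Least Q" "P w'" using assms(3) LeastI by metis
  then have "Least P \<le> Least Q" using Least_le[of P w'] by simp
  moreover have "Least Q \<le> Least P" using \<open>Q (Least P)\<close> by (rule Least_le)
  ultimately show ?thesis by simp
qed

theorem mainTheorem4:
  fixes V :: "'a set" and E :: "'a set set" and i :: nat
  assumes "graph V E" and "i \<ge> 1"
  shows "latticewidth i V E =
    (LEAST w. \<exists>(n :: nat \<Rightarrow> nat) (Z :: nat \<Rightarrow> nat \<Rightarrow> 'a set).
       (\<forall>j<i. path_decomp V E (n j) (Z j)) \<and>
       Max {card (\<Inter>j\<in>{..<i}. Z j (u j)) | u. \<forall>j<i. u j < n j} = w)"
proof -
  obtain n :: "nat \<Rightarrow> nat" and Z :: "nat \<Rightarrow> nat \<Rightarrow> 'a set"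
    where decomps: "\<forall>j<i. path_decomp V E (n j) (Z j)"
    using exists_path_decomps[OF assms(1)] by blast
  show ?thesis
    unfolding latticewidth_def
    apply (rule Least_eq_of_bounds)
    subgoal using decomps by blast
    subgoal using lattice_decomp_of_path_decomps[OF assms] by blast
    subgoal using path_decomps_of_lattice_decomp[OF assms] by fastforce
    done
qed

end
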